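(* Let $(x,y)$ be a vertex of the convex hull of the set of feasible solutions of a CKFLU instance with $m=|D|$ clients. Let $G=(V,E)$ be its associated bipartite graph and $H=(\bar V,\bar E)$ its untight subgraph. Then: (a) $G$ is acyclic; (b) each connected component of $H$ contains at most one facility $i\in F\cap\bar V$ with $0<\sum_{j\in D}x_{ij}<s$; (c) $H$ contains at most $m$ facilities and at most $2m-1$ edges.
   Context: An instance of the capacitated $k$-facility location problem with uniform capacities (CKFLU) consists of a finite set $F$ of facilities with opening costs $f_i\ge 0$, a finite set $D$ of clients with integer demands $d_j\ge 0$, unit service costs $c_{ij}\ge 0$ ($i\in F$, $j\in D$), a common positive integer capacity $s$, and an integer $k\ge1$. A feasible solution is $(x,y)$ with $x_{ij}\ge 0$, $y\in\{0,1\}^F$, $\sum_{i\in F}x_{ij}=d_j$ for all $j\in D$, $\sum_{j\in D}x_{ij}\le s\,y_i$ for all $i\in F$, and $\sum_{i\in F}y_i\le k$. For a feasible solution $(x,y)$, its associated bipartite graph is $G=(V,E)$ with $V=\{i\in F: y_i=1\}\cup D$ and $E=\{\{i,j\}: i\in F,\ j\in D,\ x_{ij}>0\}$, edge $\{i,j\}$ having weight $x_{ij}$. Its untight subgraph is $H=(\bar V,\bar E)$ where $\bar E=\{\{i,j\}\in E: 0<x_{ij}<s\}$ and $\bar V=\bigcup_{e\in\bar E}e$. *)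

theory Defs
  imports "HOL-Analysis.Analysis"
begin

text \<open>CKFLU instance with facility set = UNIV of finite type 'f and client set
  = UNIV of finite type 'd; demands d (nonnegative integers), uniform capacity s,
  bound k.\<close>

definition ckflu_feasible ::
  "('d \<Rightarrow> nat) \<Rightarrow> nat \<Rightarrow> nat \<Rightarrow> ((real^('f::finite \<times> 'd::finite)) \<times> (real^'f)) set" where
  "ckflu_feasible d s k =
     {(x, y). (\<forall>i j. x $ (i, j) \<ge> 0)
            \<and> (\<forall>i. y $ i = 0 \<or> y $ i = 1)
            \<and> (\<forall>j. (\<Sum>i\<in>UNIV. x $ (i, j)) = real (d j))
            \<and> (\<forall>i. (\<Sum>j\<in>UNIV. x $ (i, j)) \<le> real s * y $ i)
            \<and> (\<Sum>i\<in>UNIV. y $ i) \<le> real k}"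

definition assoc_edges :: "real^('f::finite \<times> 'd::finite) \<Rightarrow> ('f \<times> 'd) set" where
  "assoc_edges x = {(i, j). x $ (i, j) > 0}"

definition untight_edges :: "nat \<Rightarrow> real^('f::finite \<times> 'd::finite) \<Rightarrow> ('f \<times> 'd) set" where
  "untight_edges s x = {(i, j). 0 < x $ (i, j) \<and> x $ (i, j) < real s}"

definition bip_adj :: "('f \<times> 'd) set \<Rightarrow> ('f + 'd) \<Rightarrow> ('f + 'd) \<Rightarrow> bool" where
  "bip_adj E u v = (\<exists>i j. (i, j) \<in> E \<and>
      ((u = Inl i \<and> v = Inr j) \<or> (u = Inr j \<and> v = Inl i)))"

definition bip_acyclic :: "('f \<times> 'd) set \<Rightarrow> bool" where
  "bip_acyclic E = (\<not> (\<exists>vs. length vs \<ge> 3 \<and> distinct vs \<and>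
      (\<forall>t < length vs. bip_adj E (vs ! t) (vs ! ((t + 1) mod length vs)))))"

definition bip_connected :: "('f \<times> 'd) set \<Rightarrow> ('f + 'd) \<Rightarrow> ('f + 'd) \<Rightarrow> bool" where
  "bip_connected E u v = ((u, v) \<in> {(a, b). bip_adj E a b}\<^sup>*)"

end

(*
  A vertex (x, y) admits no direction w such that both (x + e w, y) and (x - e w, y) are
  feasible for some e > 0. The signed edge weights of an alternating walk, +1, -1, +1, ...,
  give such a direction whenever the walk is a cycle of G, or a path of H joining two
  facilities whose load lies strictly between 0 and s: the weights are supported on
  positive (resp. untight) entries of x, they keep the demand of every client and change
  the load of no facility except at the two ends of the path. Hence G is a forest and every
  component of H contains at most one such fractional facility.

  Every other facility of H is fully loaded but has an untight edge, so it has at least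
  two untight edges. In the forest H, |E| + #components <= |V|; comparing this with the
  degree count |E| >= 2 |F| - #fractional facilities gives |F| <= |D| and |E| <= 2 |D| - 1
  for the facilities F and clients D of H.
*)

theory Submission
  imports Defs "HOL-Library.Transitive_Closure_Table"
begin

lemma bip_adj_sym: "bip_adj E u v \<longleftrightarrow> bip_adj E v u"
  unfolding bip_adj_def by blast

lemma bip_adj_mono: "E \<subseteq> E' \<Longrightarrow> bip_adj E u v \<Longrightarrow> bip_adj E' u v"
  unfolding bip_adj_def by blast

lemma bip_adj_isl: "bip_adj E u v \<Longrightarrow> isl u \<noteq> isl v"
  unfolding bip_adj_def by auto

lemma bip_adj_Inl_Inr [simp]:
  "bip_adj E (Inl i) (Inr j) \<longleftrightarrow> (i, j) \<in> E"
  "bip_adj E (Inr j) (Inl i) \<longleftrightarrow> (i, j) \<in> E"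
  "\<not> bip_adj E (Inl i) (Inl i')"
  "\<not> bip_adj E (Inr j) (Inr j')"
  unfolding bip_adj_def by auto

lemma bip_connected_iff_rtranclp: "bip_connected E u v \<longleftrightarrow> (bip_adj E)\<^sup>*\<^sup>* u v"
  by (simp add: bip_connected_def rtranclp_rtrancl_eq)

lemma bip_connected_refl [simp]: "bip_connected E u u"
  by (simp add: bip_connected_iff_rtranclp)

lemma bip_connected_sym:
  assumes "bip_connected E u v"
  shows "bip_connected E v u"
proof -
  have "(bip_adj E)\<inverse>\<inverse> = bip_adj E"
    using bip_adj_sym by (auto intro!: ext)
  then show ?thesis
    using assms unfolding bip_connected_iff_rtranclp by (metis rtranclp_converseI)
qed

lemma bip_connected_trans: "bip_connected E u v \<Longrightarrow> bip_connected E v w \<Longrightarrow> bip_connected E u w"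
  unfolding bip_connected_iff_rtranclp by (rule rtranclp_trans)

lemma bip_connected_mono: "E \<subseteq> E' \<Longrightarrow> bip_connected E u v \<Longrightarrow> bip_connected E' u v"
  unfolding bip_connected_iff_rtranclp
  by (metis bip_adj_mono mono_rtranclp)

lemma bip_connected_edge: "(i, j) \<in> E \<Longrightarrow> bip_connected E (Inl i) (Inr j)"
  unfolding bip_connected_iff_rtranclp by (rule r_into_rtranclp) (auto simp: bip_adj_def)

lemma rtrancl_path_successively:
  "rtrancl_path r x xs y \<Longrightarrow> successively r (x # xs) \<and> last (x # xs) = y"
  by (induction rule: rtrancl_path.induct) (auto simp: successively_Cons)

lemma rtranclp_imp_distinct_walk:
  assumes "r\<^sup>*\<^sup>* a b"
  obtains ps where "ps \<noteq> []" "hd ps = a" "last ps = b" "distinct ps" "successively r ps"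
proof -
  obtain xs where "rtrancl_path r a xs b"
    using assms rtranclp_eq_rtrancl_path by metis
  then obtain xs' where "rtrancl_path r a xs' b" "distinct (a # xs')"
    by (rule rtrancl_path_distinct)
  with rtrancl_path_successively that show ?thesis by fastforce
qed

lemma cyclically_successive_iff:
  assumes "ps \<noteq> []"
  shows "(\<forall>t < length ps. r (ps ! t) (ps ! ((t + 1) mod length ps)))
     \<longleftrightarrow> successively r ps \<and> r (last ps) (hd ps)"
proof -
  define n where "n = length ps"
  have n: "0 < n" using assms by (simp add: n_def)
  have "(\<forall>t < n. r (ps ! t) (ps ! ((t + 1) mod n)))
     \<longleftrightarrow> (\<forall>t. Suc t < n \<longrightarrow> r (ps ! t) (ps ! Suc t)) \<and> r (ps ! (n - 1)) (ps ! 0)"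
  proof (intro iffI conjI allI impI)
    fix t assume "\<forall>t < n. r (ps ! t) (ps ! ((t + 1) mod n))" "Suc t < n"
    then show "r (ps ! t) (ps ! Suc t)" by (metis Suc_eq_plus1 Suc_lessD mod_less)
  next
    assume "\<forall>t < n. r (ps ! t) (ps ! ((t + 1) mod n))"
    then show "r (ps ! (n - 1)) (ps ! 0)" using n by (metis Suc_pred' add.commute diff_less
        less_numeral_extra(1) mod_self plus_1_eq_Suc)
  next
    fix t assume "(\<forall>t. Suc t < n \<longrightarrow> r (ps ! t) (ps ! Suc t)) \<and> r (ps ! (n - 1)) (ps ! 0)" "t < n"
    then show "r (ps ! t) (ps ! ((t + 1) mod n))"
      by (cases "Suc t = n") auto
  qed
  then show ?thesis
    using assms by (simp add: n_def successively_conv_nth last_conv_nth hd_conv_nth)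
qed

lemma bip_acyclic_iff_no_closed_walk:
  "bip_acyclic E \<longleftrightarrow> \<not> (\<exists>ps. 3 \<le> length ps \<and> distinct ps
      \<and> successively (bip_adj E) ps \<and> bip_adj E (last ps) (hd ps))"
  unfolding bip_acyclic_def
  by (metis cyclically_successive_iff list.size(3) not_numeral_le_zero)

lemma bip_acyclic_mono: "E \<subseteq> E' \<Longrightarrow> bip_acyclic E' \<Longrightarrow> bip_acyclic E"
  unfolding bip_acyclic_def by (meson bip_adj_mono)

lemma bip_acyclic_insert_not_connected:
  assumes acyc: "bip_acyclic (insert (i, j) E)" and new: "(i, j) \<notin> E"
  shows "\<not> bip_connected E (Inl i) (Inr j)"
proof
  assume "bip_connected E (Inl i) (Inr j)"
  then obtain ps where ps: "ps \<noteq> []" "hd ps = Inl i" "last ps = Inr j" "distinct ps"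
    "successively (bip_adj E) ps"
    using rtranclp_imp_distinct_walk bip_connected_iff_rtranclp by metis
  obtain b rest where ps_eq: "ps = Inl i # b # rest"
    using ps(1-3) by (cases ps; cases "tl ps") auto
  have "rest \<noteq> []" using ps_eq ps(3,5) new by auto
  then have "3 \<le> length ps" using ps_eq by (simp add: Suc_le_eq)
  moreover have "successively (bip_adj (insert (i, j) E)) ps"
    using ps(5) by (rule successively_mono) (auto intro: bip_adj_mono)
  ultimately show False
    using acyc ps(2-4) by (auto simp: bip_acyclic_iff_no_closed_walk)
qed

definition bip_separated :: "('f \<times> 'd) set \<Rightarrow> ('f + 'd) set \<Rightarrow> bool" where
  "bip_separated E R \<longleftrightarrow> (\<forall>a\<in>R. \<forall>b\<in>R. bip_connected E a b \<longrightarrow> a = b)"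

lemma bip_separated_mono: "E \<subseteq> E' \<Longrightarrow> bip_separated E' R \<Longrightarrow> bip_separated E R"
  unfolding bip_separated_def by (meson bip_connected_mono)

lemma bip_separated_insert:
  "bip_separated E R \<Longrightarrow> \<forall>r\<in>R. \<not> bip_connected E r w \<Longrightarrow> bip_separated E (insert w R)"
  unfolding bip_separated_def by (metis bip_connected_sym insert_iff)

lemma bip_forest_card_edges_add_separated:
  assumes "finite E" "bip_acyclic E" "finite V"
    and "Inl ` fst ` E \<subseteq> V" "Inr ` snd ` E \<subseteq> V" "R \<subseteq> V" "bip_separated E R"
  shows "card E + card R \<le> card V"
  using assms
proof (induction E arbitrary: R rule: finite_induct)
  case empty
  then show ?case by (simp add: card_mono)
next
  case (insert e E)
  obtain i j where e: "e = (i, j)" by fastforce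
  have acyc: "bip_acyclic E"
    using bip_acyclic_mono insert.prems(1) subset_insertI by metis
  have disconnected: "\<not> bip_connected E (Inl i) (Inr j)"
    using bip_acyclic_insert_not_connected insert.hyps(2) insert.prems(1) unfolding e by metis
  \<comment> \<open>The endpoints of e lie in different components of E, and at most one of
    these meets R; R extends by the other endpoint and stays separated in E.\<close>
  have "\<exists>w\<in>{Inl i, Inr j}. \<forall>r\<in>R. \<not> bip_connected E r w"
  proof (rule ccontr)
    assume "\<not> ?thesis"
    then obtain r1 r2 where r: "r1 \<in> R" "r2 \<in> R"
      "bip_connected E r1 (Inl i)" "bip_connected E r2 (Inr j)" by auto
    then have "bip_connected (insert e E) r1 r2"
      using bip_connected_mono[of E "insert e E"] bip_connected_edge[of i j "insert e E"]
      by (metis bip_connected_sym bip_connected_trans e insertI1 subset_insertI)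
    then have "r1 = r2" using insert.prems(6) r(1,2) by (simp add: bip_separated_def)
    then show False using disconnected r(3,4) by (metis bip_connected_sym bip_connected_trans)
  qed
  then obtain w where w: "w \<in> {Inl i, Inr j}" "\<forall>r\<in>R. \<not> bip_connected E r w" by blast
  have "w \<notin> R" using w(2) bip_connected_refl by blast
  moreover have "card E + card (insert w R) \<le> card V"
  proof (rule insert.IH[OF acyc insert.prems(2)])
    show "Inl ` fst ` E \<subseteq> V" "Inr ` snd ` E \<subseteq> V"
      using insert.prems(3,4) by auto
    show "insert w R \<subseteq> V" using insert.prems(3-5) w(1) e by auto
    show "bip_separated E (insert w R)"
      using bip_separated_insert bip_separated_mono[OF _ insert.prems(6)] w(2) by blast
  qed
  ultimately show ?case
    using insert.hyps insert.prems(5) finite_subset[OF _ insert.prems(2)] by simp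
qed

lemma finite_neighbours: "finite E \<Longrightarrow> finite {j. (i, j) \<in> E}"
  by (rule finite_subset[rotated, OF finite_imageI]) force+

lemma card_eq_sum_card_neighbours:
  assumes "finite E"
  shows "card E = (\<Sum>i\<in>fst ` E. card {j. (i, j) \<in> E})"
proof -
  note fin = finite_neighbours[OF assms]
  have "E = (SIGMA i:fst ` E. {j. (i, j) \<in> E})" by force
  then have "card E = card (SIGMA i:fst ` E. {j. (i, j) \<in> E})" by (rule arg_cong)
  also have "\<dots> = (\<Sum>i\<in>fst ` E. card {j. (i, j) \<in> E})"
    using assms fin by (intro card_SigmaI) auto
  finally show ?thesis .
qed

lemma two_card_fst_le_card_add:
  fixes E :: "('f \<times> 'd) set"
  assumes fin: "finite E" and P: "P \<subseteq> fst ` E"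
    and branching: "\<forall>i\<in>fst ` E - P. \<exists>j1 j2. j1 \<noteq> j2 \<and> (i, j1) \<in> E \<and> (i, j2) \<in> E"
  shows "2 * card (fst ` E) \<le> card E + card P"
proof -
  have "2 * card (fst ` E) = (\<Sum>i\<in>fst ` E. 2)" by simp
  also have "\<dots> \<le> (\<Sum>i\<in>fst ` E. card {j. (i, j) \<in> E} + (if i \<in> P then 1 else 0))"
  proof (rule sum_mono)
    fix i assume i: "i \<in> fst ` E"
    note fin_i = finite_neighbours[OF fin, of i]
    show "2 \<le> card {j. (i, j) \<in> E} + (if i \<in> P then 1 else 0)"
    proof (cases "i \<in> P")
      case True
      obtain j where "(i, j) \<in> E" using i by force
      then have "card {j. (i, j) \<in> E} \<noteq> 0" using fin_i by auto
      then show ?thesis using True by simp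
    next
      case False
      then obtain j1 j2 where "j1 \<noteq> j2" "(i, j1) \<in> E" "(i, j2) \<in> E"
        using branching i by blast
      then have "{j1, j2} \<subseteq> {j. (i, j) \<in> E}" by blast
      then have "card {j1, j2} \<le> card {j. (i, j) \<in> E}" by (rule card_mono[OF fin_i])
      then show ?thesis using False \<open>j1 \<noteq> j2\<close> by simp
    qed
  qed
  also have "\<dots> = card E + (\<Sum>i\<in>fst ` E. if i \<in> P then 1 else 0)"
    using fin by (simp add: sum.distrib card_eq_sum_card_neighbours)
  also have "\<dots> = card E + card P"
    using P fin by (simp add: sum.If_cases Int_absorb1)
  finally show ?thesis .
qed

lemma bip_forest_card_bounds:
  fixes E :: "('f \<times> 'd) set"
  assumes fin: "finite E" and acyc: "bip_acyclic E" and P: "P \<subseteq> fst ` E"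
    and branching: "\<forall>i\<in>fst ` E - P. \<exists>j1 j2. j1 \<noteq> j2 \<and> (i, j1) \<in> E \<and> (i, j2) \<in> E"
    and sep: "bip_separated E (Inl ` P)"
  shows "card (fst ` E) \<le> card (snd ` E) \<and> card E \<le> 2 * card (snd ` E) - 1"
proof (cases "E = {}")
  case nonempty: False
  define V where "V = Inl ` fst ` E \<union> Inr ` snd ` E"
  have card_V: "card V = card (fst ` E) + card (snd ` E)"
    unfolding V_def using fin by (subst card_Un_disjoint) (auto simp: card_image)
  have degree_sum: "2 * card (fst ` E) \<le> card E + card P"
    using fin P branching by (rule two_card_fst_le_card_add)
  obtain R where R: "R \<subseteq> V" "bip_separated E R" "card P \<le> card R" "1 \<le> card R"
  proof (cases "P = {}")
    case True
    obtain j where "j \<in> snd ` E" using nonempty by auto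
    then show ?thesis
      using that[of "{Inr j}"] True by (auto simp: V_def bip_separated_def)
  next
    case False
    have "finite P" using P fin finite_subset by blast
    then have "1 \<le> card (Inl ` P)"
      using False by (simp add: card_image Suc_le_eq card_gt_0_iff)
    moreover have "Inl ` P \<subseteq> V" using P by (auto simp: V_def)
    ultimately show ?thesis
      using that[of "Inl ` P"] sep by (simp add: card_image)
  qed
  have "card E + card R \<le> card V"
    using fin acyc R(1,2) by (intro bip_forest_card_edges_add_separated) (auto simp: V_def)
  then show ?thesis using card_V degree_sum R(3,4) by linarith
qed simp

(* bip_adj {e} a b holds iff a and b are the two endpoints of e. *)
definition link :: "'f + 'd \<Rightarrow> 'f + 'd \<Rightarrow> real^('f::finite \<times> 'd::finite)" where
  "link a b = (\<chi> e. if bip_adj {e} a b then 1 else 0)"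

fun alt_walk :: "('f::finite + 'd::finite) list \<Rightarrow> real^('f \<times> 'd)" where
  "alt_walk (a # b # ps) = link a b - alt_walk (b # ps)"
| "alt_walk _ = 0"

definition incidence_sum :: "real^('f::finite \<times> 'd::finite) \<Rightarrow> 'f + 'd \<Rightarrow> real" where
  "incidence_sum w v =
     (case v of Inl i \<Rightarrow> \<Sum>j\<in>UNIV. w $ (i, j) | Inr j \<Rightarrow> \<Sum>i\<in>UNIV. w $ (i, j))"

lemma incidence_sum_diff:
  "incidence_sum (w - w') v = incidence_sum w v - incidence_sum w' v"
  by (simp add: incidence_sum_def sum_subtractf split: sum.split)

lemma incidence_sum_link:
  assumes "isl a \<noteq> isl b"
  shows "incidence_sum (link a b) v = (if v = a \<or> v = b then 1 else 0)"
  using assms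
  by (cases a; cases b; cases v) (auto simp: incidence_sum_def link_def bip_adj_def if_distrib)

lemma incidence_sum_alt_walk:
  assumes "successively (\<lambda>a b. isl a \<noteq> isl b) ps" "ps \<noteq> []"
  shows "incidence_sum (alt_walk ps) v
    = (if v = hd ps then 1 else 0) - (-1) ^ (length ps - 1) * (if v = last ps then 1 else 0)"
  using assms
proof (induction ps rule: alt_walk.induct)
  case (1 a b ps)
  have "a \<noteq> b" using "1.prems"(1) by auto
  then show ?case
    using "1.IH" "1.prems"(1) by (auto simp: incidence_sum_diff incidence_sum_link)
qed (auto simp: incidence_sum_def split: sum.split)

lemma alternating_parity:
  assumes "successively (\<lambda>a b. isl a \<noteq> isl b) ps" "ps \<noteq> []"
  shows "isl (last ps) = isl (hd ps) \<longleftrightarrow> even (length ps - 1)"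
  using assms by (induction ps rule: induct_list012) auto

lemma incidence_sum_alt_walk_closed:
  assumes "successively (\<lambda>a b. isl a \<noteq> isl b) ps" "ps \<noteq> []" "last ps = hd ps"
  shows "incidence_sum (alt_walk ps) v = 0"
  using incidence_sum_alt_walk[OF assms(1,2)] alternating_parity[OF assms(1,2)] assms(3)
  by simp

lemma alt_walk_support:
  assumes "successively (bip_adj E) ps" "alt_walk ps $ e \<noteq> 0"
  shows "e \<in> E"
  using assms
proof (induction ps rule: alt_walk.induct)
  case (1 a b ps)
  show ?case
  proof (cases "link a b $ e = 0")
    case True
    then show ?thesis using "1" by auto
  next
    case False
    then have "bip_adj {e} a b" by (simp add: link_def split: if_splits)
    moreover have "bip_adj E a b" using "1.prems"(1) by simp
    ultimately show ?thesis by (auto simp: bip_adj_def)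
  qed
qed auto

lemma alt_walk_eq_0_if_endpoint_notin:
  assumes "bip_adj {e} v w" "v \<notin> set ps"
  shows "alt_walk ps $ e = 0"
  using assms
  by (induction ps rule: alt_walk.induct) (auto simp: link_def bip_adj_def)

lemma alt_walk_first_edge:
  assumes "bip_adj {e} a b" "a \<notin> set (b # ps)"
  shows "alt_walk (a # b # ps) $ e = 1"
  using assms alt_walk_eq_0_if_endpoint_notin[OF assms] by (simp add: link_def)

lemma extreme_point_plus_minus_eq_0:
  fixes z u :: "'a::real_vector"
  assumes "z extreme_point_of (convex hull S)" "z + u \<in> S" "z - u \<in> S"
  shows "u = 0"
proof (rule ccontr)
  assume "u \<noteq> 0"
  have "z - u \<noteq> z + u"
  proof
    assume "z - u = z + u"
    then have "(2::real) *\<^sub>R u = 0" by (simp add: scaleR_2 algebra_simps)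
    with \<open>u \<noteq> 0\<close> show False by simp
  qed
  then have "midpoint (z - u) (z + u) \<in> open_segment (z - u) (z + u)"
    by (simp add: midpoint_in_open_segment)
  moreover have "midpoint (z - u) (z + u) = z"
    by (simp add: midpoint_def scaleR_add_right[symmetric])
  ultimately show False
    using assms hull_inc[of _ S convex] by (metis extreme_point_of_def)
qed

lemma eventually_at_right_0_mult_le:
  "0 < a \<Longrightarrow> \<forall>\<^sub>F t in at_right 0. t * c \<le> (a::real)"
proof -
  assume "0 < a"
  moreover have "((\<lambda>t. t * c) \<longlongrightarrow> 0 * c) (at_right 0)"
    by (intro tendsto_intros)
  ultimately have "\<forall>\<^sub>F t in at_right 0. t * c < a"
    by (intro order_tendstoD(2)) auto
  then show ?thesis by (rule eventually_mono) simp
qed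

lemma ckflu_feasible_load_le:
  assumes "(x, y) \<in> ckflu_feasible d s k"
  shows "incidence_sum x (Inl i) \<le> real s"
proof -
  have "y $ i = 0 \<or> y $ i = 1" "incidence_sum x (Inl i) \<le> real s * y $ i"
    using assms by (auto simp: ckflu_feasible_def incidence_sum_def)
  then show ?thesis by auto
qed

lemma ckflu_feasible_open_if_load_pos:
  assumes "(x, y) \<in> ckflu_feasible d s k" "0 < incidence_sum x (Inl i)"
  shows "y $ i = 1"
proof -
  have "y $ i = 0 \<or> y $ i = 1" "incidence_sum x (Inl i) \<le> real s * y $ i"
    using assms by (auto simp: ckflu_feasible_def incidence_sum_def)
  then show ?thesis using assms(2) by auto
qed

lemma ckflu_feasible_add_small:
  fixes x w :: "real^('f::finite \<times> 'd::finite)" and y :: "real^'f"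
  assumes feas: "(x, y) \<in> ckflu_feasible d s k"
    and clients: "\<forall>j. incidence_sum w (Inr j) = 0"
    and opened: "\<forall>i. incidence_sum w (Inl i) \<noteq> 0 \<longrightarrow> y $ i = 1"
    and small_entries: "\<forall>e. \<epsilon> * \<bar>w $ e\<bar> \<le> x $ e"
    and small_loads: "\<forall>i. \<epsilon> * \<bar>incidence_sum w (Inl i)\<bar> \<le> real s - incidence_sum x (Inl i)"
    and t: "\<bar>t\<bar> \<le> \<epsilon>"
  shows "(x + t *\<^sub>R w, y) \<in> ckflu_feasible d s k"
proof -
  have x: "\<forall>i. y $ i = 0 \<or> y $ i = 1" "\<forall>j. incidence_sum x (Inr j) = real (d j)"
    "\<forall>i. incidence_sum x (Inl i) \<le> real s * y $ i" "(\<Sum>i\<in>UNIV. y $ i) \<le> real k"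
    using feas by (auto simp: ckflu_feasible_def incidence_sum_def)
  have scale: "\<bar>t * c\<bar> \<le> \<epsilon> * \<bar>c\<bar>" for c
    using t by (simp add: abs_mult mult_right_mono)
  have inc: "incidence_sum (x + t *\<^sub>R w) v = incidence_sum x v + t * incidence_sum w v" for v
    by (simp add: incidence_sum_def sum.distrib sum_distrib_left split: sum.split)
  have "0 \<le> x $ e + t * w $ e" for e
    using scale[of "w $ e"] small_entries[rule_format, of e] by (simp add: abs_le_iff)
  moreover have "incidence_sum (x + t *\<^sub>R w) (Inr j) = real (d j)" for j
    using inc x(2) clients by simp
  moreover have "incidence_sum (x + t *\<^sub>R w) (Inl i) \<le> real s * y $ i" for i
    using inc[of "Inl i"] x(3) opened small_loads[rule_format, of i] scale[of "incidence_sum w (Inl i)"]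
    by (cases "incidence_sum w (Inl i) = 0") (auto simp: abs_le_iff)
  ultimately show ?thesis
    using x(1,4) by (simp add: ckflu_feasible_def incidence_sum_def)
qed

lemma ckflu_feasible_perturb:
  fixes x w :: "real^('f::finite \<times> 'd::finite)" and y :: "real^'f"
  assumes feas: "(x, y) \<in> ckflu_feasible d s k"
    and supp: "\<forall>e. w $ e \<noteq> 0 \<longrightarrow> 0 < x $ e"
    and clients: "\<forall>j. incidence_sum w (Inr j) = 0"
    and facilities: "\<forall>i. incidence_sum w (Inl i) \<noteq> 0
       \<longrightarrow> incidence_sum x (Inl i) < real s \<and> y $ i = 1"
  obtains \<epsilon> where "0 < \<epsilon>" "(x + \<epsilon> *\<^sub>R w, y) \<in> ckflu_feasible d s k"
    "(x - \<epsilon> *\<^sub>R w, y) \<in> ckflu_feasible d s k"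
proof -
  have x0: "\<forall>i j. 0 \<le> x $ (i, j)" using feas by (simp add: ckflu_feasible_def)
  have le_s: "\<forall>i. incidence_sum x (Inl i) \<le> real s"
    using ckflu_feasible_load_le[OF feas] by blast
  have "\<forall>\<^sub>F \<epsilon> in at_right 0. \<epsilon> * \<bar>w $ e\<bar> \<le> x $ e" for e
    using supp x0 eventually_at_right_0_mult_le[of "x $ e" "\<bar>w $ e\<bar>"]
    by (cases "w $ e = 0"; cases e) auto
  moreover have "\<forall>\<^sub>F \<epsilon> in at_right 0.
      \<epsilon> * \<bar>incidence_sum w (Inl i)\<bar> \<le> real s - incidence_sum x (Inl i)" for i
    using facilities le_s eventually_at_right_0_mult_le[of "real s - incidence_sum x (Inl i)"]
    by (cases "incidence_sum w (Inl i) = 0") (auto simp: diff_ge_0_iff_ge)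
  ultimately have "\<forall>\<^sub>F \<epsilon> in at_right 0. 0 < \<epsilon> \<and> (\<forall>e. \<epsilon> * \<bar>w $ e\<bar> \<le> x $ e)
      \<and> (\<forall>i. \<epsilon> * \<bar>incidence_sum w (Inl i)\<bar> \<le> real s - incidence_sum x (Inl i))"
    by (intro eventually_conj eventually_all_finite eventually_at_right_less) auto
  then obtain \<epsilon> where \<epsilon>: "0 < \<epsilon>" "\<forall>e. \<epsilon> * \<bar>w $ e\<bar> \<le> x $ e"
      "\<forall>i. \<epsilon> * \<bar>incidence_sum w (Inl i)\<bar> \<le> real s - incidence_sum x (Inl i)"
    using eventually_happens' trivial_limit_at_right_real by blast
  have move: "(x + t *\<^sub>R w, y) \<in> ckflu_feasible d s k" if "\<bar>t\<bar> \<le> \<epsilon>" for t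
    using ckflu_feasible_add_small[OF feas clients _ \<epsilon>(2,3) that] facilities by blast
  show ?thesis
  proof (rule that[OF \<epsilon>(1)])
    show "(x + \<epsilon> *\<^sub>R w, y) \<in> ckflu_feasible d s k" using move \<epsilon>(1) by simp
    show "(x - \<epsilon> *\<^sub>R w, y) \<in> ckflu_feasible d s k" using move[of "- \<epsilon>"] \<epsilon>(1) by simp
  qed
qed

lemma ckflu_extreme_point_rigid:
  fixes x w :: "real^('f::finite \<times> 'd::finite)" and y :: "real^'f"
  assumes "(x, y) extreme_point_of (convex hull (ckflu_feasible d s k))"
    and "\<forall>e. w $ e \<noteq> 0 \<longrightarrow> 0 < x $ e"
    and "\<forall>j. incidence_sum w (Inr j) = 0"
    and "\<forall>i. incidence_sum w (Inl i) \<noteq> 0 \<longrightarrow> incidence_sum x (Inl i) < real s \<and> y $ i = 1"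
  shows "w = 0"
proof -
  obtain \<epsilon> where \<epsilon>: "0 < \<epsilon>" "(x + \<epsilon> *\<^sub>R w, y) \<in> ckflu_feasible d s k"
    "(x - \<epsilon> *\<^sub>R w, y) \<in> ckflu_feasible d s k"
    using ckflu_feasible_perturb assms extreme_point_of_convex_hull by metis
  have "(\<epsilon> *\<^sub>R w, 0 :: real^'f) = 0"
    using extreme_point_plus_minus_eq_0[OF assms(1), of "(\<epsilon> *\<^sub>R w, 0)"] \<epsilon>(2,3) by simp
  then show ?thesis using \<epsilon>(1) by (simp add: zero_prod_def)
qed

lemma ckflu_full_facility_branching:
  fixes x :: "real^('f::finite \<times> 'd::finite)"
  assumes feas: "(x, y) \<in> ckflu_feasible d s k" and i: "i \<in> fst ` untight_edges s x"
    and full: "\<not> (0 < incidence_sum x (Inl i) \<and> incidence_sum x (Inl i) < real s)"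
  shows "\<exists>j1 j2. j1 \<noteq> j2 \<and> (i, j1) \<in> untight_edges s x \<and> (i, j2) \<in> untight_edges s x"
proof (rule ccontr)
  assume single: "\<not> ?thesis"
  obtain j where j: "(i, j) \<in> untight_edges s x" using i by force
  then have xj: "0 < x $ (i, j)" "x $ (i, j) < real s" by (auto simp: untight_edges_def)
  have x0: "0 \<le> x $ e" for e using feas by (cases e) (auto simp: ckflu_feasible_def)
  have partial: "(\<Sum>j'\<in>J. x $ (i, j')) \<le> incidence_sum x (Inl i)" for J
    using x0 by (auto simp: incidence_sum_def intro: sum_mono2)
  have "x $ (i, j) \<le> incidence_sum x (Inl i)" using partial[of "{j}"] by simp
  then have load: "incidence_sum x (Inl i) = real s"
    using full xj ckflu_feasible_load_le[OF feas, of i] by linarith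
  have others: "x $ (i, j') = 0" if "j' \<noteq> j" for j'
  proof (rule ccontr)
    assume "x $ (i, j') \<noteq> 0"
    then have "0 < x $ (i, j')" using x0[of "(i, j')"] by simp
    moreover have "(i, j') \<notin> untight_edges s x" using single j that by blast
    ultimately have "real s \<le> x $ (i, j')" by (simp add: untight_edges_def)
    then show False using partial[of "{j, j'}"] that load xj by simp
  qed
  have "incidence_sum x (Inl i) = x $ (i, j)"
    unfolding incidence_sum_def using others by (simp add: sum.remove[of UNIV j])
  then show False using load xj by simp
qed

lemma ckflu_extreme_point_acyclic:
  fixes x :: "real^('f::finite \<times> 'd::finite)"
  assumes extreme: "(x, y) extreme_point_of (convex hull (ckflu_feasible d s k))"
  shows "bip_acyclic (assoc_edges x)"
  unfolding bip_acyclic_iff_no_closed_walk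
proof clarify
  fix ps assume len: "3 \<le> length ps" and dist: "distinct ps"
    and walk: "successively (bip_adj (assoc_edges x)) ps"
    and closing: "bip_adj (assoc_edges x) (last ps) (hd ps)"
  obtain a b c rest where ps: "ps = a # b # c # rest"
    using len by (metis Suc_le_length_iff numeral_3_eq_3)
  define W where "W = ps @ [a]"
  have W_walk: "successively (bip_adj (assoc_edges x)) W"
    using walk closing by (simp add: W_def successively_append_iff) (simp add: ps)
  then have W_alt: "successively (\<lambda>u v. isl u \<noteq> isl v) W"
    by (rule successively_mono) (rule bip_adj_isl)
  \<comment> \<open>The first vertex reappears at the end of W, so the weight is read off at the second edge.\<close>
  obtain e where e: "bip_adj {e} b c"
    using walk by (auto simp: ps bip_adj_def)
  have "alt_walk (b # c # rest @ [a]) $ e = 1"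
    using e dist by (intro alt_walk_first_edge) (auto simp: ps)
  moreover have "link a b $ e = 0"
    using e dist by (auto simp: ps link_def bip_adj_def)
  ultimately have "alt_walk W $ e \<noteq> 0" by (simp add: W_def ps)
  moreover have "alt_walk W = 0"
  proof (rule ckflu_extreme_point_rigid[OF extreme])
    show "\<forall>e. alt_walk W $ e \<noteq> 0 \<longrightarrow> 0 < x $ e"
      using alt_walk_support[OF W_walk] by (auto simp: assoc_edges_def)
    show "\<forall>j. incidence_sum (alt_walk W) (Inr j) = 0"
      "\<forall>i. incidence_sum (alt_walk W) (Inl i) \<noteq> 0 \<longrightarrow> incidence_sum x (Inl i) < real s \<and> y $ i = 1"
      using incidence_sum_alt_walk_closed[OF W_alt] by (auto simp: W_def ps)
  qed
  ultimately show False by simp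
qed

lemma ckflu_extreme_point_fractional_separated:
  fixes x :: "real^('f::finite \<times> 'd::finite)"
  assumes extreme: "(x, y) extreme_point_of (convex hull (ckflu_feasible d s k))"
    and frac1: "0 < incidence_sum x (Inl i1)" "incidence_sum x (Inl i1) < real s"
    and frac2: "0 < incidence_sum x (Inl i2)" "incidence_sum x (Inl i2) < real s"
    and conn: "bip_connected (untight_edges s x) (Inl i1) (Inl i2)"
  shows "i1 = i2"
proof (rule ccontr)
  assume ne: "i1 \<noteq> i2"
  have feas: "(x, y) \<in> ckflu_feasible d s k"
    using extreme by (rule extreme_point_of_convex_hull)
  obtain ps where ps: "ps \<noteq> []" "hd ps = Inl i1" "last ps = Inl i2" "distinct ps"
    and walk: "successively (bip_adj (untight_edges s x)) ps"
    using conn rtranclp_imp_distinct_walk unfolding bip_connected_iff_rtranclp by metis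
  then obtain b rest where ps_eq: "ps = Inl i1 # b # rest"
    using ne by (cases ps; cases "tl ps") auto
  have alt: "successively (\<lambda>u v. isl u \<noteq> isl v) ps"
    using walk by (rule successively_mono) (rule bip_adj_isl)
  obtain e where e: "bip_adj {e} (Inl i1) b"
    using walk by (auto simp: ps_eq bip_adj_def)
  have "alt_walk ps $ e = 1"
    using e ps(4) unfolding ps_eq by (intro alt_walk_first_edge) auto
  moreover have "alt_walk ps = 0"
  proof (rule ckflu_extreme_point_rigid[OF extreme])
    show "\<forall>e. alt_walk ps $ e \<noteq> 0 \<longrightarrow> 0 < x $ e"
      using alt_walk_support[OF walk] by (auto simp: untight_edges_def)
    show "\<forall>j. incidence_sum (alt_walk ps) (Inr j) = 0"
      using incidence_sum_alt_walk[OF alt ps(1)] ps(2,3) by simp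
    show "\<forall>i. incidence_sum (alt_walk ps) (Inl i) \<noteq> 0
        \<longrightarrow> incidence_sum x (Inl i) < real s \<and> y $ i = 1"
    proof (intro allI impI)
      fix i assume "incidence_sum (alt_walk ps) (Inl i) \<noteq> 0"
      then have "i \<in> {i1, i2}"
        using incidence_sum_alt_walk[OF alt ps(1), of "Inl i"] ps(2,3) by (auto split: if_splits)
      then show "incidence_sum x (Inl i) < real s \<and> y $ i = 1"
        using frac1 frac2 ckflu_feasible_open_if_load_pos[OF feas] by blast
    qed
  qed
  ultimately show False by simp
qed

theorem mainTheorem7:
  fixes d :: "'d::finite \<Rightarrow> nat" and s k :: nat
    and x :: "real^('f::finite \<times> 'd)" and y :: "real^'f"
  assumes "s > 0" and "k \<ge> 1"
    and vertex: "(x, y) extreme_point_of (convex hull (ckflu_feasible d s k))"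
  shows "bip_acyclic (assoc_edges x)
    \<and> (\<forall>i1 i2. i1 \<in> fst ` untight_edges s x \<and> i2 \<in> fst ` untight_edges s x
            \<and> 0 < (\<Sum>j\<in>UNIV. x $ (i1, j)) \<and> (\<Sum>j\<in>UNIV. x $ (i1, j)) < real s
            \<and> 0 < (\<Sum>j\<in>UNIV. x $ (i2, j)) \<and> (\<Sum>j\<in>UNIV. x $ (i2, j)) < real s
            \<and> bip_connected (untight_edges s x) (Inl i1) (Inl i2)
            \<longrightarrow> i1 = i2)
    \<and> card (fst ` untight_edges s x) \<le> CARD('d)
    \<and> card (untight_edges s x) \<le> 2 * CARD('d) - 1"
proof -
  have feas: "(x, y) \<in> ckflu_feasible d s k"
    using vertex by (rule extreme_point_of_convex_hull)
  define H where "H = untight_edges s x"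
  define P where "P = {i \<in> fst ` H. 0 < incidence_sum x (Inl i) \<and> incidence_sum x (Inl i) < real s}"
  have acyclic: "bip_acyclic (assoc_edges x)"
    using vertex by (rule ckflu_extreme_point_acyclic)
  have separated: "bip_separated H (Inl ` P)"
    using ckflu_extreme_point_fractional_separated[OF vertex]
    by (auto simp: bip_separated_def P_def H_def)
  have "card (fst ` H) \<le> card (snd ` H) \<and> card H \<le> 2 * card (snd ` H) - 1"
  proof (rule bip_forest_card_bounds[OF _ _ _ _ separated])
    show "bip_acyclic H"
      using acyclic by (rule bip_acyclic_mono[rotated]) (auto simp: H_def untight_edges_def assoc_edges_def)
    show "\<forall>i\<in>fst ` H - P. \<exists>j1 j2. j1 \<noteq> j2 \<and> (i, j1) \<in> H \<and> (i, j2) \<in> H"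
      using ckflu_full_facility_branching[OF feas] by (auto simp: P_def H_def)
  qed (auto simp: P_def)
  moreover have "card (snd ` H) \<le> CARD('d)" by (rule card_mono) auto
  ultimately show ?thesis
    using acyclic ckflu_extreme_point_fractional_separated[OF vertex]
    by (auto simp: H_def incidence_sum_def)
qed

end
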